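(* Let $X$, $\mathcal{B}$, $\Delta$ and the Gelfand transform $f\mapsto\hat f$ be as in the context (in particular $\mathcal{B}$ vanishes nowhere on $X$), and let $\mathcal{B}_c:=\{\varphi\in\mathcal{B}:\hat\varphi\in C_c(\Delta)\}$, where $C_c(\Delta)$ denotes the continuous compactly supported functions on $\Delta$. Then $\mathcal{B}_c$ is dense in $\mathcal{B}$ with respect to the supremum norm.
   Context: $X$ is a nonempty set and $\mathcal{B}$ is a real vector space of bounded functions $X\to\mathbb{R}$ closed under pointwise multiplication, pointwise max and min, with $f\wedge1\in\mathcal{B}$ for $f\in\mathcal{B}$. Assume that for every $x\in X$ there is $f\in\mathcal{B}$ with $f(x)\neq0$. $A(\mathcal{B})$ is the supremum-norm closure of $\mathcal{B}+i\mathcal{B}$, a commutative $C^\ast$-algebra with pointwise operations and complex conjugation as involution; $\Delta$ is its spectrum (nonzero continuous multiplicative linear functionals with the Gelfand topology), locally compact Hausdorff; $\hat a(\varphi)=\varphi(a)$ is the Gelfand transform, an isometric $^\ast$-isomorphism $A(\mathcal{B})\to C_0(\Delta)$. *)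

theory Defs
  imports "HOL-Analysis.Analysis"
begin

text \<open>The set X is represented by the (nonempty) type 'a; functions on X are
  total functions on 'a.\<close>

definition function_lattice_algebra :: "('a \<Rightarrow> real) set \<Rightarrow> bool" where
  "function_lattice_algebra B \<longleftrightarrow>
     (\<forall>f\<in>B. bounded (range f)) \<and>
     (\<lambda>x. 0) \<in> B \<and>
     (\<forall>f\<in>B. \<forall>g\<in>B. (\<lambda>x. f x + g x) \<in> B) \<and>
     (\<forall>c. \<forall>f\<in>B. (\<lambda>x. c * f x) \<in> B) \<and>
     (\<forall>f\<in>B. \<forall>g\<in>B. (\<lambda>x. f x * g x) \<in> B) \<and>
     (\<forall>f\<in>B. \<forall>g\<in>B. (\<lambda>x. max (f x) (g x)) \<in> B) \<and>
     (\<forall>f\<in>B. \<forall>g\<in>B. (\<lambda>x. min (f x) (g x)) \<in> B) \<and>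
     (\<forall>f\<in>B. (\<lambda>x. min (f x) 1) \<in> B)"

text \<open>A(B): closure in the supremum norm of B + iB.\<close>
definition A_alg :: "('a \<Rightarrow> real) set \<Rightarrow> ('a \<Rightarrow> complex) set" where
  "A_alg B = {a. \<forall>\<epsilon>>0. \<exists>f\<in>B. \<exists>g\<in>B.
        \<forall>x. cmod (a x - (complex_of_real (f x) + \<i> * complex_of_real (g x))) \<le> \<epsilon>}"

text \<open>Spectrum: nonzero continuous (= bounded) multiplicative linear functionals on A,
  represented as extensional functions on A.\<close>
definition gelfand_spectrum :: "('a \<Rightarrow> complex) set \<Rightarrow> (('a \<Rightarrow> complex) \<Rightarrow> complex) set" where
  "gelfand_spectrum A = {\<psi> \<in> extensional A.
      (\<forall>a\<in>A. \<forall>b\<in>A. \<psi> (\<lambda>x. a x + b x) = \<psi> a + \<psi> b) \<and>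
      (\<forall>c. \<forall>a\<in>A. \<psi> (\<lambda>x. c * a x) = c * \<psi> a) \<and>
      (\<forall>a\<in>A. \<forall>b\<in>A. \<psi> (\<lambda>x. a x * b x) = \<psi> a * \<psi> b) \<and>
      (\<exists>a\<in>A. \<psi> a \<noteq> 0) \<and>
      (\<exists>C. \<forall>a\<in>A. \<forall>M. (\<forall>x. cmod (a x) \<le> M) \<longrightarrow> cmod (\<psi> a) \<le> C * M)}"

text \<open>Gelfand topology: weak-* topology, i.e. topology of pointwise convergence on A.\<close>
definition gelfand_topology :: "('a \<Rightarrow> complex) set \<Rightarrow> (('a \<Rightarrow> complex) \<Rightarrow> complex) topology" where
  "gelfand_topology A =
     subtopology (product_topology (\<lambda>_. euclidean) A) (gelfand_spectrum A)"

definition gelfand_transform :: "('a \<Rightarrow> complex) \<Rightarrow> (('a \<Rightarrow> complex) \<Rightarrow> complex) \<Rightarrow> complex" where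
  "gelfand_transform a = (\<lambda>\<psi>. \<psi> a)"

definition compactly_supported_transform :: "('a \<Rightarrow> complex) set \<Rightarrow> ('a \<Rightarrow> complex) \<Rightarrow> bool" where
  "compactly_supported_transform A a \<longleftrightarrow>
     compactin (gelfand_topology A)
       ((gelfand_topology A) closure_of {\<psi> \<in> gelfand_spectrum A. gelfand_transform a \<psi> \<noteq> 0})"

definition B_c :: "('a \<Rightarrow> real) set \<Rightarrow> ('a \<Rightarrow> real) set" where
  "B_c B = {\<phi> \<in> B. compactly_supported_transform (A_alg B) (\<lambda>x. complex_of_real (\<phi> x))}"

end

theory Submission
  imports Defs
begin

text \<open>Given f in B and \<epsilon> > 0, the soft threshold g = f - max (-\<epsilon>) (min f \<epsilon>) lies in B and is
  \<epsilon>-close to f, and g e = g for e = min (|f|/\<epsilon>) 1, also in B. Every character \<psi> with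
  \<psi> g \<noteq> 0 therefore satisfies \<psi> e = 1. Characters are automatically contractive, so this
  level set is a closed subset of a product of discs, hence compact by Tychonoff, and it contains
  the support of the transform of g.\<close>

lemma norm_mult_diff_le:
  fixes a b p q :: "'b::real_normed_algebra"
  assumes "norm (a - p) \<le> \<delta>" "norm (b - q) \<le> \<delta>" "norm a \<le> Ma" "norm b \<le> Mb" "\<delta> \<le> 1"
  shows "norm (a * b - p * q) \<le> \<delta> * (Ma + Mb + 1)"
proof -
  have "norm q \<le> Mb + 1"
    using norm_triangle_ineq4[of b "b - q"] assms(2,4,5) by simp
  have "a * b - p * q = a * (b - q) + (a - p) * q" by (simp add: algebra_simps)
  then have "norm (a * b - p * q) \<le> norm a * norm (b - q) + norm (a - p) * norm q"
    by (metis norm_triangle_le add_mono norm_mult_ineq)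
  also have "\<dots> \<le> Ma * \<delta> + \<delta> * (Mb + 1)"
    using assms \<open>norm q \<le> Mb + 1\<close>
    by (intro add_mono mult_mono) (auto intro: order_trans[OF norm_ge_zero])
  finally show ?thesis by (simp add: algebra_simps)
qed

lemma le_if_powers_bounded:
  fixes r M C :: real
  assumes bound: "\<And>n. r ^ Suc n \<le> C * M ^ Suc n" and "0 \<le> r" "0 \<le> M"
  shows "r \<le> M"
proof (rule ccontr)
  assume "\<not> r \<le> M"
  then have "M < r" by simp
  show False
  proof (cases "M = 0")
    case True
    then show False using bound[of 0] \<open>M < r\<close> by simp
  next
    case False
    then have "M > 0" using \<open>0 \<le> M\<close> by simp
    have "r / M > 1" using \<open>M < r\<close> \<open>M > 0\<close> by simp
    then obtain n where "C < (r / M) ^ n" using real_arch_pow by blast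
    then have "C * M ^ Suc n < (r / M) ^ n * M ^ Suc n"
      using \<open>M > 0\<close> by (intro mult_strict_right_mono) auto
    also have "\<dots> = r ^ n * M"
      using \<open>M > 0\<close> by (simp add: power_divide)
    also have "\<dots> \<le> r ^ n * r"
      using \<open>M < r\<close> \<open>0 \<le> r\<close> by (intro mult_left_mono) auto
    finally show False using bound[of n] by (simp add: mult.commute)
  qed
qed
lemma continuous_map_mult:
  fixes f g :: "'a \<Rightarrow> 'b::real_normed_algebra"
  shows "continuous_map X euclidean f \<Longrightarrow> continuous_map X euclidean g
    \<Longrightarrow> continuous_map X euclidean (\<lambda>x. f x * g x)"
  by (simp add: continuous_map_atin tendsto_mult)

text \<open>Off the index set every point of the product takes the value undefined, so
  evaluation at an arbitrary k is continuous.\<close>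
lemma continuous_map_product_coordinate:
  fixes k :: 'i
  shows "continuous_map (product_topology (\<lambda>_. euclidean) I)
    (euclidean :: 'b::topological_space topology) (\<lambda>\<psi>. \<psi> k)"
proof (cases "k \<in> I")
  case True
  then show ?thesis using continuous_map_product_projection[of k I "\<lambda>_. euclidean"] by simp
next
  case False
  show ?thesis
  proof (rule continuous_map_eq[OF continuous_map_canonical_const])
    fix \<psi> assume "\<psi> \<in> topspace (product_topology (\<lambda>_. euclidean) I)"
    then show "undefined = \<psi> k"
      using False by (simp add: PiE_def extensional_def)
  qed
qed

lemma closedin_Collect_Ball:
  assumes "\<And>i. i \<in> I \<Longrightarrow> closedin X {x \<in> topspace X. Q i x}"
  shows "closedin X {x \<in> topspace X. \<forall>i\<in>I. Q i x}"
proof (cases "I = {}")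
  case False
  then have "{x \<in> topspace X. \<forall>i\<in>I. Q i x} = (\<Inter>i\<in>I. {x \<in> topspace X. Q i x})"
    by auto
  then show ?thesis using False assms by auto
qed simp

lemma closedin_norm_le:
  fixes h :: "'a \<Rightarrow> 'b::real_normed_vector"
  assumes "continuous_map X euclidean h"
  shows "closedin X {x \<in> topspace X. norm (h x) \<le> M}"
  using closedin_continuous_map_preimage[OF continuous_map_norm[OF assms], of "{..M}"] by simp

lemma closedin_Collect_conj:
  "closedin X {x \<in> topspace X. P x} \<Longrightarrow> closedin X {x \<in> topspace X. Q x}
    \<Longrightarrow> closedin X {x \<in> topspace X. P x \<and> Q x}"
  using closedin_Int[of X "{x \<in> topspace X. P x}" "{x \<in> topspace X. Q x}"]
  by (simp add: Collect_conj_eq Int_assoc Int_left_commute)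

context
  fixes B :: "('a \<Rightarrow> real) set"
  assumes B: "function_lattice_algebra B"
begin

lemma function_lattice_algebra_bounded: "f \<in> B \<Longrightarrow> bounded (range f)"
  and function_lattice_algebra_zero: "(\<lambda>x. 0) \<in> B"
  and function_lattice_algebra_add: "f \<in> B \<Longrightarrow> g \<in> B \<Longrightarrow> (\<lambda>x. f x + g x) \<in> B"
  and function_lattice_algebra_scaleR: "f \<in> B \<Longrightarrow> (\<lambda>x. c * f x) \<in> B"
  and function_lattice_algebra_mult: "f \<in> B \<Longrightarrow> g \<in> B \<Longrightarrow> (\<lambda>x. f x * g x) \<in> B"
  and function_lattice_algebra_max: "f \<in> B \<Longrightarrow> g \<in> B \<Longrightarrow> (\<lambda>x. max (f x) (g x)) \<in> B"
  and function_lattice_algebra_min_one: "f \<in> B \<Longrightarrow> (\<lambda>x. min (f x) 1) \<in> B"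
  using B by (simp_all add: function_lattice_algebra_def)

lemma function_lattice_algebra_diff: "f \<in> B \<Longrightarrow> g \<in> B \<Longrightarrow> (\<lambda>x. f x - g x) \<in> B"
  using function_lattice_algebra_add[of f "\<lambda>x. (-1) * g x"] function_lattice_algebra_scaleR[of g "-1"]
  by simp

lemma function_lattice_algebra_abs:
  assumes "f \<in> B"
  shows "(\<lambda>x. \<bar>f x\<bar>) \<in> B"
proof -
  have "(\<lambda>x. max (f x) ((-1) * f x)) \<in> B"
    using assms by (intro function_lattice_algebra_max function_lattice_algebra_scaleR)
  moreover have "max (f x) ((-1) * f x) = \<bar>f x\<bar>" for x
    by (simp add: max_def)
  ultimately show ?thesis by simp
qed

lemma function_lattice_algebra_min_const:
  assumes "f \<in> B" "c > 0"
  shows "(\<lambda>x. min (f x) c) \<in> B"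
proof -
  have "(\<lambda>x. c * min (inverse c * f x) 1) \<in> B"
    using assms(1) by (intro function_lattice_algebra_scaleR function_lattice_algebra_min_one)
  moreover have "c * min (inverse c * f x) 1 = min (f x) c" for x
    using assms(2) by (simp add: min_mult_distrib_left mult.assoc[symmetric])
  ultimately show ?thesis by simp
qed

lemma function_lattice_algebra_max_const:
  assumes "f \<in> B" "c > 0"
  shows "(\<lambda>x. max (- c) (f x)) \<in> B"
proof -
  have "(\<lambda>x. (-1) * min ((-1) * f x) c) \<in> B"
    using assms by (intro function_lattice_algebra_scaleR function_lattice_algebra_min_const)
  moreover have "(-1) * min ((-1) * f x) c = max (- c) (f x)" for x
    by (simp add: min_def max_def)
  ultimately show ?thesis by simp
qed

end

lemma A_algE:
  assumes "a \<in> A_alg B" "\<epsilon> > 0"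
  obtains f g where "f \<in> B" "g \<in> B"
    "\<And>x. cmod (a x - (complex_of_real (f x) + \<i> * complex_of_real (g x))) \<le> \<epsilon>"
  using assms unfolding A_alg_def by blast

lemma of_real_mem_A_alg:
  assumes "function_lattice_algebra B" "f \<in> B"
  shows "(\<lambda>x. complex_of_real (f x)) \<in> A_alg B"
  using assms(2) function_lattice_algebra_zero[OF assms(1)] unfolding A_alg_def by force

lemma A_alg_bounded:
  assumes "function_lattice_algebra B" "a \<in> A_alg B"
  obtains M where "\<And>x. cmod (a x) \<le> M"
proof -
  obtain f g where fg: "f \<in> B" "g \<in> B"
    and approx: "\<And>x. cmod (a x - (complex_of_real (f x) + \<i> * complex_of_real (g x))) \<le> 1"
    using A_algE[OF assms(2), of 1] by auto
  obtain Mf where Mf: "\<And>x. \<bar>f x\<bar> \<le> Mf"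
    using function_lattice_algebra_bounded[OF assms(1) fg(1)] by (auto simp: bounded_iff)
  obtain Mg where Mg: "\<And>x. \<bar>g x\<bar> \<le> Mg"
    using function_lattice_algebra_bounded[OF assms(1) fg(2)] by (auto simp: bounded_iff)
  have "cmod (a x) \<le> 1 + \<bar>f x\<bar> + \<bar>g x\<bar>" for x
    using approx[of x] norm_triangle_ineq2[of "a x" "complex_of_real (f x) + \<i> * complex_of_real (g x)"]
      norm_triangle_ineq[of "complex_of_real (f x)" "\<i> * complex_of_real (g x)"]
    by (simp add: norm_mult)
  then have "cmod (a x) \<le> 1 + Mf + Mg" for x
    using Mf[of x] Mg[of x] by (smt (verit))
  then show thesis by (rule that)
qed

lemma A_alg_mult:
  assumes B: "function_lattice_algebra B" and "a \<in> A_alg B" "b \<in> A_alg B"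
  shows "(\<lambda>x. a x * b x) \<in> A_alg B"
proof -
  obtain Ma Mb where Ma: "\<And>x. cmod (a x) \<le> Ma" and Mb: "\<And>x. cmod (b x) \<le> Mb"
    using A_alg_bounded[OF B] assms(2,3) by metis
  have "Ma \<ge> 0" "Mb \<ge> 0" using Ma Mb by (meson norm_ge_zero order_trans)+
  show ?thesis unfolding A_alg_def
  proof (intro CollectI allI impI)
    fix \<epsilon> :: real assume "\<epsilon> > 0"
    define \<delta> where "\<delta> = min 1 (\<epsilon> / (Ma + Mb + 1))"
    have "\<delta> > 0" "\<delta> \<le> 1" "\<delta> \<le> \<epsilon> / (Ma + Mb + 1)"
      using \<open>\<epsilon> > 0\<close> \<open>Ma \<ge> 0\<close> \<open>Mb \<ge> 0\<close> by (auto simp: \<delta>_def)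
    then have "\<delta> * (Ma + Mb + 1) \<le> \<epsilon>"
      using \<open>Ma \<ge> 0\<close> \<open>Mb \<ge> 0\<close> by (simp add: pos_le_divide_eq)
    obtain f1 g1 where "f1 \<in> B" "g1 \<in> B"
      and approx_a: "\<And>x. cmod (a x - (complex_of_real (f1 x) + \<i> * complex_of_real (g1 x))) \<le> \<delta>"
      using A_algE[OF assms(2) \<open>\<delta> > 0\<close>] by blast
    obtain f2 g2 where "f2 \<in> B" "g2 \<in> B"
      and approx_b: "\<And>x. cmod (b x - (complex_of_real (f2 x) + \<i> * complex_of_real (g2 x))) \<le> \<delta>"
      using A_algE[OF assms(3) \<open>\<delta> > 0\<close>] by blast
    let ?re = "\<lambda>x. f1 x * f2 x - g1 x * g2 x"
    let ?im = "\<lambda>x. f1 x * g2 x + g1 x * f2 x"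
    have "?re \<in> B" "?im \<in> B"
      using \<open>f1 \<in> B\<close> \<open>g1 \<in> B\<close> \<open>f2 \<in> B\<close> \<open>g2 \<in> B\<close>
      by (simp_all add: function_lattice_algebra_diff function_lattice_algebra_add
          function_lattice_algebra_mult B)
    moreover have "cmod (a x * b x - (complex_of_real (?re x) + \<i> * complex_of_real (?im x))) \<le> \<epsilon>" for x
    proof -
      have product: "complex_of_real (?re x) + \<i> * complex_of_real (?im x)
            = (complex_of_real (f1 x) + \<i> * complex_of_real (g1 x))
              * (complex_of_real (f2 x) + \<i> * complex_of_real (g2 x))"
        by (simp add: complex_eq_iff)
      show ?thesis
        unfolding product
        using norm_mult_diff_le[OF approx_a approx_b Ma Mb \<open>\<delta> \<le> 1\<close>] \<open>\<delta> * (Ma + Mb + 1) \<le> \<epsilon>\<close>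
        by (rule order_trans)
    qed
    ultimately show "\<exists>f\<in>B. \<exists>g\<in>B. \<forall>x. cmod (a x * b x - (complex_of_real (f x) + \<i> * complex_of_real (g x))) \<le> \<epsilon>"
      by (intro bexI[of _ ?re] bexI[of _ ?im]) auto
  qed
qed

lemma A_alg_power:
  assumes "function_lattice_algebra B" "a \<in> A_alg B"
  shows "(\<lambda>x. a x ^ Suc n) \<in> A_alg B"
proof (induction n)
  case 0
  then show ?case using assms(2) by simp
next
  case (Suc n)
  then show ?case using A_alg_mult[OF assms(1,2) Suc] by simp
qed

lemma gelfand_spectrum_power:
  assumes "function_lattice_algebra B" "\<psi> \<in> gelfand_spectrum (A_alg B)" "a \<in> A_alg B"
  shows "\<psi> (\<lambda>x. a x ^ Suc n) = \<psi> a ^ Suc n"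
proof (induction n)
  case 0
  then show ?case by simp
next
  case (Suc n)
  have "\<forall>a\<in>A_alg B. \<forall>b\<in>A_alg B. \<psi> (\<lambda>x. a x * b x) = \<psi> a * \<psi> b"
    using assms(2) by (simp add: gelfand_spectrum_def)
  from this[rule_format, OF assms(3) A_alg_power[OF assms(1,3)]] show ?case
    using Suc by simp
qed

text \<open>The boundedness constant of \<psi> is removed by applying it to the powers of a.\<close>
lemma gelfand_spectrum_norm_le:
  assumes B: "function_lattice_algebra B" and \<psi>: "\<psi> \<in> gelfand_spectrum (A_alg B)"
    and a: "a \<in> A_alg B" and M: "\<And>x. cmod (a x) \<le> M"
  shows "cmod (\<psi> a) \<le> M"
proof -
  obtain C where C: "\<And>a M. a \<in> A_alg B \<Longrightarrow> \<forall>x. cmod (a x) \<le> M \<Longrightarrow> cmod (\<psi> a) \<le> C * M"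
    using \<psi> unfolding gelfand_spectrum_def by blast
  show ?thesis
  proof (rule le_if_powers_bounded[where C = C])
    fix n
    have "\<forall>x. cmod (a x ^ Suc n) \<le> M ^ Suc n"
      unfolding norm_power using M by (intro allI power_mono) auto
    then have "cmod (\<psi> (\<lambda>x. a x ^ Suc n)) \<le> C * M ^ Suc n"
      using C A_alg_power[OF B a] by blast
    then show "cmod (\<psi> a) ^ Suc n \<le> C * M ^ Suc n"
      by (simp only: gelfand_spectrum_power[OF B \<psi> a] norm_power)
  next
    show "0 \<le> M" using M by (meson norm_ge_zero order_trans)
  qed simp
qed

definition contractive_characters :: "('a \<Rightarrow> complex) set \<Rightarrow> (('a \<Rightarrow> complex) \<Rightarrow> complex) set" where
  "contractive_characters A = {\<psi> \<in> extensional A.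
      (\<forall>a\<in>A. \<forall>b\<in>A. \<psi> (\<lambda>x. a x + b x) = \<psi> a + \<psi> b) \<and>
      (\<forall>d\<in>UNIV. \<forall>a\<in>A. \<psi> (\<lambda>x. d * a x) = d * \<psi> a) \<and>
      (\<forall>a\<in>A. \<forall>b\<in>A. \<psi> (\<lambda>x. a x * b x) = \<psi> a * \<psi> b) \<and>
      (\<forall>a\<in>A. \<forall>M\<in>{M. \<forall>x. cmod (a x) \<le> M}. cmod (\<psi> a) \<le> M)}"

lemma closedin_contractive_characters:
  "closedin (product_topology (\<lambda>_. euclidean) A) (contractive_characters A)"
proof -
  let ?P = "product_topology (\<lambda>_::'a \<Rightarrow> complex. euclidean::complex topology) A"
  have "contractive_characters A = {\<psi> \<in> topspace ?P.
      (\<forall>a\<in>A. \<forall>b\<in>A. \<psi> (\<lambda>x. a x + b x) = \<psi> a + \<psi> b) \<and>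
      (\<forall>d\<in>UNIV. \<forall>a\<in>A. \<psi> (\<lambda>x. d * a x) = d * \<psi> a) \<and>
      (\<forall>a\<in>A. \<forall>b\<in>A. \<psi> (\<lambda>x. a x * b x) = \<psi> a * \<psi> b) \<and>
      (\<forall>a\<in>A. \<forall>M\<in>{M. \<forall>x. cmod (a x) \<le> M}. cmod (\<psi> a) \<le> M)}"
    by (simp add: contractive_characters_def PiE_def)
  also have "closedin ?P \<dots>"
    by (intro closedin_Collect_conj closedin_Collect_Ball closedin_continuous_maps_eq[where Y = euclidean]
        closedin_norm_le continuous_map_add continuous_map_mult continuous_map_product_coordinate
        continuous_map_canonical_const) auto
  finally show ?thesis .
qed

lemma compactin_contractive_characters:
  assumes "\<And>a. a \<in> A \<Longrightarrow> \<exists>M. \<forall>x. cmod (a x) \<le> M"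
  shows "compactin (product_topology (\<lambda>_. euclidean) A) (contractive_characters A)"
proof -
  obtain bound where "\<forall>a\<in>A. \<forall>x. cmod (a x) \<le> bound a"
    using assms by metis
  then have "contractive_characters A \<subseteq> PiE A (\<lambda>a. cball (0::complex) (bound a))"
    by (auto simp: contractive_characters_def PiE_def Pi_def)
  moreover have "compactin (product_topology (\<lambda>_. euclidean) A) (PiE A (\<lambda>a. cball (0::complex) (bound a)))"
    by (simp add: compactin_PiE)
  ultimately show ?thesis
    using closed_compactin closedin_contractive_characters by blast
qed

lemma gelfand_spectrum_level_set_eq:
  assumes B: "function_lattice_algebra B" and e: "e \<in> A_alg B" and "c \<noteq> 0"
  shows "{\<psi> \<in> gelfand_spectrum (A_alg B). \<psi> e = c}
    = {\<psi> \<in> contractive_characters (A_alg B). \<psi> e = c}"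
proof (intro equalityI subsetI)
  fix \<psi> assume "\<psi> \<in> {\<psi> \<in> gelfand_spectrum (A_alg B). \<psi> e = c}"
  then have \<psi>: "\<psi> \<in> gelfand_spectrum (A_alg B)" "\<psi> e = c" by auto
  then have "\<forall>a\<in>A_alg B. \<forall>M\<in>{M. \<forall>x. cmod (a x) \<le> M}. cmod (\<psi> a) \<le> M"
    using gelfand_spectrum_norm_le[OF B] by blast
  with \<psi> show "\<psi> \<in> {\<psi> \<in> contractive_characters (A_alg B). \<psi> e = c}"
    by (simp add: contractive_characters_def gelfand_spectrum_def)
next
  fix \<psi> assume \<psi>: "\<psi> \<in> {\<psi> \<in> contractive_characters (A_alg B). \<psi> e = c}"
  then have "\<exists>a\<in>A_alg B. \<psi> a \<noteq> 0"
    using e \<open>c \<noteq> 0\<close> by auto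
  moreover have "\<exists>C. \<forall>a\<in>A_alg B. \<forall>M. (\<forall>x. cmod (a x) \<le> M) \<longrightarrow> cmod (\<psi> a) \<le> C * M"
    using \<psi> by (intro exI[of _ 1]) (simp add: contractive_characters_def)
  ultimately show "\<psi> \<in> {\<psi> \<in> gelfand_spectrum (A_alg B). \<psi> e = c}"
    using \<psi> by (simp add: gelfand_spectrum_def contractive_characters_def)
qed

lemma compactin_gelfand_spectrum_level_set:
  assumes B: "function_lattice_algebra B" and "e \<in> A_alg B" "c \<noteq> 0"
  shows "compactin (gelfand_topology (A_alg B)) {\<psi> \<in> gelfand_spectrum (A_alg B). \<psi> e = c}"
proof -
  let ?P = "product_topology (\<lambda>_::'a \<Rightarrow> complex. euclidean::complex topology) (A_alg B)"
  have "closedin ?P {\<psi> \<in> topspace ?P. \<psi> e = c}"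
    by (intro closedin_continuous_maps_eq[where Y = euclidean] continuous_map_product_coordinate
        continuous_map_canonical_const) auto
  then have "closedin ?P (contractive_characters (A_alg B) \<inter> {\<psi> \<in> topspace ?P. \<psi> e = c})"
    by (intro closedin_Int closedin_contractive_characters)
  moreover have "contractive_characters (A_alg B) \<inter> {\<psi> \<in> topspace ?P. \<psi> e = c}
      = {\<psi> \<in> contractive_characters (A_alg B). \<psi> e = c}"
    using closedin_subset[OF closedin_contractive_characters] by blast
  ultimately have "closedin ?P {\<psi> \<in> contractive_characters (A_alg B). \<psi> e = c}"
    by simp
  moreover have "compactin ?P (contractive_characters (A_alg B))"
    using A_alg_bounded[OF B] by (metis compactin_contractive_characters)
  ultimately have "compactin ?P {\<psi> \<in> contractive_characters (A_alg B). \<psi> e = c}"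
    by (intro closed_compactin[OF _ Collect_subset])
  then have "compactin ?P {\<psi> \<in> gelfand_spectrum (A_alg B). \<psi> e = c}"
    unfolding gelfand_spectrum_level_set_eq[OF assms] .
  then show ?thesis
    by (simp add: gelfand_topology_def compactin_subtopology)
qed

lemma closedin_gelfand_spectrum_level_set:
  "closedin (gelfand_topology A) {\<psi> \<in> gelfand_spectrum A. \<psi> e = c}"
proof -
  have "continuous_map (gelfand_topology A) euclidean (\<lambda>\<psi>. \<psi> e)"
    unfolding gelfand_topology_def
    by (intro continuous_map_from_subtopology continuous_map_product_coordinate)
  then have "closedin (gelfand_topology A) {\<psi> \<in> topspace (gelfand_topology A). \<psi> e \<in> {c}}"
    by (rule closedin_continuous_map_preimage) simp
  moreover have "topspace (gelfand_topology A) = gelfand_spectrum A"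
    by (auto simp: gelfand_topology_def gelfand_spectrum_def PiE_def)
  ultimately show ?thesis by simp
qed

lemma compactly_supported_transform_if_absorbed:
  assumes B: "function_lattice_algebra B" and "a \<in> A_alg B" "e \<in> A_alg B"
    and absorbed: "\<And>x. a x * e x = a x"
  shows "compactly_supported_transform (A_alg B) a"
proof -
  let ?K = "{\<psi> \<in> gelfand_spectrum (A_alg B). \<psi> e = 1}"
  have "\<psi> e = 1" if "\<psi> \<in> gelfand_spectrum (A_alg B)" "\<psi> a \<noteq> 0" for \<psi>
  proof -
    have "\<psi> a = \<psi> (\<lambda>x. a x * e x)" by (simp only: absorbed)
    also have "\<dots> = \<psi> a * \<psi> e"
      using that(1) assms(2,3) by (simp add: gelfand_spectrum_def)
    finally show ?thesis using that(2) by simp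
  qed
  then have "{\<psi> \<in> gelfand_spectrum (A_alg B). gelfand_transform a \<psi> \<noteq> 0} \<subseteq> ?K"
    by (auto simp: gelfand_transform_def)
  then have "gelfand_topology (A_alg B) closure_of
      {\<psi> \<in> gelfand_spectrum (A_alg B). gelfand_transform a \<psi> \<noteq> 0} \<subseteq> ?K"
    by (rule closure_of_minimal) (rule closedin_gelfand_spectrum_level_set)
  then show ?thesis
    unfolding compactly_supported_transform_def
    by (rule closed_compactin[OF compactin_gelfand_spectrum_level_set[OF B assms(3) one_neq_zero]
          _ closedin_closure_of])
qed

lemma soft_threshold_absorbed:
  fixes t \<epsilon> :: real
  assumes "\<epsilon> > 0"
  shows "(t - max (- \<epsilon>) (min t \<epsilon>)) * min (\<bar>t\<bar> / \<epsilon>) 1 = t - max (- \<epsilon>) (min t \<epsilon>)"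
proof (cases "\<bar>t\<bar> \<le> \<epsilon>")
  case False
  then show ?thesis using assms by (simp add: min_def)
qed (auto simp: min_def max_def)

lemma soft_threshold_mem_B_c:
  assumes B: "function_lattice_algebra B" and "f \<in> B" "\<epsilon> > 0"
  shows "(\<lambda>x. f x - max (- \<epsilon>) (min (f x) \<epsilon>)) \<in> B_c B"
proof -
  define g where "g x = f x - max (- \<epsilon>) (min (f x) \<epsilon>)" for x
  define e where "e x = min (\<bar>f x\<bar> / \<epsilon>) 1" for x
  have "g \<in> B"
    unfolding g_def using assms(2,3)
    by (intro function_lattice_algebra_diff function_lattice_algebra_max_const
        function_lattice_algebra_min_const B)
  have "(\<lambda>x. min (inverse \<epsilon> * \<bar>f x\<bar>) 1) \<in> B"
    using assms(2) by (intro function_lattice_algebra_min_one function_lattice_algebra_scaleR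
        function_lattice_algebra_abs B)
  moreover have "e = (\<lambda>x. min (inverse \<epsilon> * \<bar>f x\<bar>) 1)"
    by (simp add: fun_eq_iff e_def divide_inverse_commute)
  ultimately have "e \<in> B" by simp
  have "compactly_supported_transform (A_alg B) (\<lambda>x. complex_of_real (g x))"
  proof (rule compactly_supported_transform_if_absorbed[OF B])
    show "(\<lambda>x. complex_of_real (g x)) \<in> A_alg B" "(\<lambda>x. complex_of_real (e x)) \<in> A_alg B"
      using \<open>g \<in> B\<close> \<open>e \<in> B\<close> by (simp_all add: of_real_mem_A_alg B)
    show "complex_of_real (g x) * complex_of_real (e x) = complex_of_real (g x)" for x
      by (simp only: g_def e_def soft_threshold_absorbed[OF \<open>\<epsilon> > 0\<close>] flip: of_real_mult)
  qed
  with \<open>g \<in> B\<close> have "g \<in> B_c B"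
    by (simp add: B_c_def)
  then show ?thesis
    unfolding g_def .
qed

theorem mainTheorem7:
  fixes B :: "('a \<Rightarrow> real) set"
  assumes "function_lattice_algebra B"
    and "\<forall>x. \<exists>f\<in>B. f x \<noteq> 0"
  shows "\<forall>f\<in>B. \<forall>\<epsilon>>0. \<exists>g\<in>B_c B. \<forall>x. \<bar>f x - g x\<bar> \<le> \<epsilon>"
proof (intro ballI allI impI)
  fix f \<epsilon> assume "f \<in> B" "(\<epsilon>::real) > 0"
  show "\<exists>g\<in>B_c B. \<forall>x. \<bar>f x - g x\<bar> \<le> \<epsilon>"
  proof (rule bexI)
    show "(\<lambda>x. f x - max (- \<epsilon>) (min (f x) \<epsilon>)) \<in> B_c B"
      using \<open>f \<in> B\<close> \<open>\<epsilon> > 0\<close> by (rule soft_threshold_mem_B_c[OF assms(1)])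
    show "\<forall>x. \<bar>f x - (f x - max (- \<epsilon>) (min (f x) \<epsilon>))\<bar> \<le> \<epsilon>"
      using \<open>\<epsilon> > 0\<close> by (auto simp: abs_le_iff max_def min_def)
  qed
qed

end
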